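(* Let $d\ge2$, let $\omega$ be any configuration, and let $C^*$ be an open dual cluster. Then \[ \partial B_{C^*}=\bigcup_{e^*\in\Delta C^*}Q_{e^*}, \] where $\partial$ denotes the topological boundary in $\mathbb{R}^d$.
   Context: Dual lattice: vertices $(\mathbb{Z}^d)^*=\mathbb{Z}^d+(1/2,\dots,1/2)$, dual bonds $\langle x^*,y^*\rangle$ with $\|x^*-y^*\|_1=1$. For $x^*\in(\mathbb{Z}^d)^*$, $B_{x^*}=\prod_{i=1}^d[(x^* )_i-1/2,(x^* )_i+1/2]$, and for a dual bond $e^*=\langle x^*,y^*\rangle$, $Q_{e^*}=B_{x^*}\cap B_{y^*}$ (a $(d-1)$-dimensional unit face). Given a configuration in which each dual bond is open or closed, an open dual cluster $C^*$ is a connected component (possibly a single vertex) of the graph of open dual bonds; $B_{C^*}=\bigcup_{x^*\in C^*}B_{x^*}$, and $\Delta C^*$ is the set of dual bonds with exactly one endpoint in $C^*$. *)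

theory Defs
  imports "HOL-Analysis.Analysis"
begin

definition dual_vertices :: "(real^'n) set" where
  "dual_vertices = {x. \<forall>i. x$i - 1/2 \<in> \<int>}"

definition dual_bond :: "real^'n \<Rightarrow> real^'n \<Rightarrow> bool" where
  "dual_bond x y \<longleftrightarrow> x \<in> dual_vertices \<and> y \<in> dual_vertices \<and> (\<Sum>i\<in>UNIV. \<bar>x$i - y$i\<bar>) = 1"

text \<open>A configuration assigns open (True) / closed (False) to each dual bond,
  a bond being represented as the unordered pair {x, y}.\<close>
definition open_dual_adj :: "((real^'n) set \<Rightarrow> bool) \<Rightarrow> real^'n \<Rightarrow> real^'n \<Rightarrow> bool" where
  "open_dual_adj \<omega> x y \<longleftrightarrow> dual_bond x y \<and> \<omega> {x, y}"

definition open_dual_cluster :: "((real^'n) set \<Rightarrow> bool) \<Rightarrow> (real^'n) set \<Rightarrow> bool" where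
  "open_dual_cluster \<omega> C \<longleftrightarrow>
     (\<exists>x\<in>dual_vertices. C = {y. (x, y) \<in> {(a, b). open_dual_adj \<omega> a b}\<^sup>*})"

definition box_of :: "real^'n \<Rightarrow> (real^'n) set" where
  "box_of x = cbox (\<chi> i. x$i - 1/2) (\<chi> i. x$i + 1/2)"

definition face_of_bond :: "real^'n \<Rightarrow> real^'n \<Rightarrow> (real^'n) set" where
  "face_of_bond x y = box_of x \<inter> box_of y"

definition cluster_region :: "(real^'n) set \<Rightarrow> (real^'n) set" where
  "cluster_region C = (\<Union>x\<in>C. box_of x)"

definition edge_boundary :: "(real^'n) set \<Rightarrow> ((real^'n) \<times> (real^'n)) set" where
  "edge_boundary C = {(x, y). dual_bond x y \<and> x \<in> C \<and> y \<notin> C}"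

end

theory Submission
  imports Defs
begin

text \<open>
  All boxes meeting a small enough neighbourhood of a point p contain p. Hence B_C is closed,
  and p is a frontier point exactly when it lies both in a box of C and in a box outside C.
  Two boxes sharing p differ by exactly 1 in each coordinate where their centres differ;
  changing these coordinates one at a time walks from the inside box to the outside box
  through boxes that all contain p, and the step at which the walk leaves C is a boundary
  bond whose face contains p. Conversely, a face of a boundary bond lies in B_C and in the
  closure of the open box of the outer vertex, which misses B_C.
\<close>

definition open_box_of :: "real^'n \<Rightarrow> (real^'n) set" where
  "open_box_of x = box (\<chi> i. x$i - 1/2) (\<chi> i. x$i + 1/2)"

lemma mem_box_of_iff: "q \<in> box_of z \<longleftrightarrow> (\<forall>i. \<bar>q$i - z$i\<bar> \<le> 1/2)"
proof -
  have "\<And>i. (z$i - 1/2 \<le> q$i \<and> q$i \<le> z$i + 1/2) \<longleftrightarrow> \<bar>q$i - z$i\<bar> \<le> 1/2" by arith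
  then show ?thesis unfolding box_of_def mem_box_cart by simp
qed

lemma mem_open_box_of_iff: "q \<in> open_box_of z \<longleftrightarrow> (\<forall>i. \<bar>q$i - z$i\<bar> < 1/2)"
proof -
  have "\<And>i. (z$i - 1/2 < q$i \<and> q$i < z$i + 1/2) \<longleftrightarrow> \<bar>q$i - z$i\<bar> < 1/2" by arith
  then show ?thesis unfolding open_box_of_def mem_box_cart by simp
qed

lemma closure_open_box_of: "closure (open_box_of x) = box_of x"
proof -
  have "x \<in> open_box_of x" by (simp add: mem_open_box_of_iff)
  then show ?thesis unfolding open_box_of_def box_of_def by (metis closure_box empty_iff)
qed

lemma half_int_dist_ge_1:
  fixes a b :: real
  assumes "a - 1/2 \<in> \<int>" "b - 1/2 \<in> \<int>" "a \<noteq> b"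
  shows "\<bar>a - b\<bar> \<ge> 1"
proof -
  have "a - b \<in> \<int>" using Ints_diff[OF assms(1,2)] by simp
  then obtain k where "a - b = of_int k" by (auto elim: Ints_cases)
  moreover have "k \<noteq> 0" using assms(3) calculation by auto
  moreover have "\<bar>k\<bar> \<ge> 1" using \<open>k \<noteq> 0\<close> by linarith
  ultimately show ?thesis by (metis of_int_1_le_iff of_int_abs)
qed

lemma half_int_gap:
  fixes t :: real
  shows "\<exists>e>0. \<forall>h. h - 1/2 \<in> \<int> \<longrightarrow> \<bar>h - t\<bar> < 1/2 + e \<longrightarrow> \<bar>h - t\<bar> \<le> 1/2"
proof (intro exI conjI allI impI)
  define e where "e = min (of_int \<lfloor>t\<rfloor> + 1 - t) (t + 1 - of_int \<lceil>t\<rceil>)"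
  show "e > 0" unfolding e_def by linarith
  fix h :: real
  assume "h - 1/2 \<in> \<int>" and near: "\<bar>h - t\<bar> < 1/2 + e"
  then obtain k where k: "h = of_int k + 1/2" by (metis Ints_cases diff_add_cancel)
  have "k \<le> \<lfloor>t\<rfloor>"
  proof (rule ccontr)
    assume "\<not> k \<le> \<lfloor>t\<rfloor>"
    then have "of_int \<lfloor>t\<rfloor> + 1 \<le> real_of_int k" by linarith
    then show False using near k unfolding e_def by linarith
  qed
  moreover have "\<lceil>t\<rceil> \<le> k + 1"
  proof (rule ccontr)
    assume "\<not> \<lceil>t\<rceil> \<le> k + 1"
    then have "real_of_int k + 2 \<le> of_int \<lceil>t\<rceil>" by linarith
    then show False using near k unfolding e_def by linarith
  qed
  ultimately show "\<bar>h - t\<bar> \<le> 1/2" using k by linarith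
qed

lemma eventually_nhds_dual_box_mem:
  fixes p :: "real^'n"
  shows "eventually (\<lambda>q. \<forall>w\<in>dual_vertices. q \<in> box_of w \<longrightarrow> p \<in> box_of w) (nhds p)"
proof -
  have "eventually (\<lambda>q. \<forall>h. h - 1/2 \<in> \<int> \<longrightarrow> \<bar>h - q$i\<bar> \<le> 1/2 \<longrightarrow> \<bar>h - p$i\<bar> \<le> 1/2) (nhds p)"
    for i
  proof -
    obtain e where "e > 0" and gap: "\<And>h. h - 1/2 \<in> \<int> \<Longrightarrow> \<bar>h - p$i\<bar> < 1/2 + e \<Longrightarrow> \<bar>h - p$i\<bar> \<le> 1/2"
      using half_int_gap by blast
    have "\<bar>h - p$i\<bar> \<le> 1/2" if "dist q p < e" "h - 1/2 \<in> \<int>" "\<bar>h - q$i\<bar> \<le> 1/2" for q h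
    proof -
      have "\<bar>q$i - p$i\<bar> < e" using dist_vec_nth_le[where x = q and y = p and i = i] that(1) by (simp add: dist_real_def)
      then show ?thesis using gap[OF that(2)] that(3) by linarith
    qed
    then show ?thesis using \<open>e > 0\<close> unfolding eventually_nhds_metric by blast
  qed
  then have "eventually (\<lambda>q. \<forall>i h. h - 1/2 \<in> \<int> \<longrightarrow> \<bar>h - q$i\<bar> \<le> 1/2 \<longrightarrow> \<bar>h - p$i\<bar> \<le> 1/2) (nhds p)"
    by (rule eventually_all_finite)
  then show ?thesis
    by eventually_elim (auto simp: mem_box_of_iff dual_vertices_def abs_minus_commute)
qed

lemma ex_dual_box_mem: "\<exists>w\<in>dual_vertices. (q::real^'n) \<in> box_of w"
proof
  show "(\<chi> i. of_int \<lfloor>q$i\<rfloor> + 1/2) \<in> dual_vertices" by (simp add: dual_vertices_def)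
  show "q \<in> box_of (\<chi> i. of_int \<lfloor>q$i\<rfloor> + 1/2)"
    unfolding mem_box_of_iff
  proof
    fix i
    show "\<bar>q$i - (\<chi> i. of_int \<lfloor>q$i\<rfloor> + 1/2)$i\<bar> \<le> 1/2"
      using floor_correct[of "q$i"] unfolding vec_lambda_beta abs_le_iff by linarith
  qed
qed

lemma dual_vertices_coord_neq:
  assumes "x \<in> dual_vertices" "y \<in> dual_vertices" "x$i \<noteq> y$i"
  shows "\<bar>x$i - y$i\<bar> \<ge> 1"
  using assms half_int_dist_ge_1 unfolding dual_vertices_def by blast

lemma open_box_of_meets_box_of:
  assumes "y \<in> dual_vertices" "z \<in> dual_vertices" "q \<in> open_box_of y" "q \<in> box_of z"
  shows "z = y"
proof (rule ccontr)
  assume "z \<noteq> y"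
  then obtain i where "z$i \<noteq> y$i" by (metis vec_eq_iff)
  then have "\<bar>z$i - y$i\<bar> \<ge> 1" using dual_vertices_coord_neq assms(1,2) by blast
  moreover have "\<bar>q$i - y$i\<bar> < 1/2" "\<bar>q$i - z$i\<bar> \<le> 1/2"
    using assms(3,4) mem_open_box_of_iff mem_box_of_iff by blast+
  ultimately show False by linarith
qed

lemma closed_cluster_region:
  assumes "C \<subseteq> dual_vertices"
  shows "closed (cluster_region C)"
  unfolding closed_def
proof (rule open_subopen[THEN iffD2], intro ballI)
  fix p assume "p \<in> - cluster_region C"
  obtain S where S: "open S" "p \<in> S" "\<And>q w. q \<in> S \<Longrightarrow> w \<in> dual_vertices \<Longrightarrow> q \<in> box_of w \<Longrightarrow> p \<in> box_of w"
    using eventually_nhds_dual_box_mem[of p] unfolding eventually_nhds by blast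
  have "S \<subseteq> - cluster_region C"
    using S(3) assms \<open>p \<in> - cluster_region C\<close> unfolding cluster_region_def by blast
  then show "\<exists>T. open T \<and> p \<in> T \<and> T \<subseteq> - cluster_region C" using S(1,2) by blast
qed

lemma box_of_outside_disjoint_interior:
  assumes "C \<subseteq> dual_vertices" "y \<in> dual_vertices" "y \<notin> C"
  shows "box_of y \<inter> interior (cluster_region C) = {}"
proof -
  have "open_box_of y \<subseteq> - cluster_region C"
    using open_box_of_meets_box_of assms unfolding cluster_region_def by blast
  then have "closure (open_box_of y) \<subseteq> closure (- cluster_region C)" by (rule closure_mono)
  then show ?thesis by (auto simp: closure_open_box_of closure_complement)
qed

lemma frontier_imp_mem_box_outside:
  assumes "C \<subseteq> dual_vertices" "p \<in> frontier (cluster_region C)"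
  shows "\<exists>w\<in>dual_vertices. w \<notin> C \<and> p \<in> box_of w"
proof -
  obtain S where S: "open S" "p \<in> S" "\<And>q w. q \<in> S \<Longrightarrow> w \<in> dual_vertices \<Longrightarrow> q \<in> box_of w \<Longrightarrow> p \<in> box_of w"
    using eventually_nhds_dual_box_mem[of p] unfolding eventually_nhds by blast
  have "\<not> S \<subseteq> cluster_region C"
    using S(1,2) assms(2) interior_maximal unfolding frontier_def by blast
  then obtain q where "q \<in> S" "q \<notin> cluster_region C" by blast
  moreover obtain w where "w \<in> dual_vertices" "q \<in> box_of w" using ex_dual_box_mem by blast
  ultimately show ?thesis using S(3) unfolding cluster_region_def by blast
qed

lemma box_of_common_point_coord_dist:
  assumes "x \<in> dual_vertices" "w \<in> dual_vertices" "p \<in> box_of x" "p \<in> box_of w" "x$i \<noteq> w$i"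
  shows "\<bar>x$i - w$i\<bar> = 1"
proof -
  have "\<bar>p$i - x$i\<bar> \<le> 1/2" "\<bar>p$i - w$i\<bar> \<le> 1/2" using assms(3,4) mem_box_of_iff by blast+
  moreover have "\<bar>x$i - w$i\<bar> \<ge> 1" using dual_vertices_coord_neq assms(1,2,5) by blast
  ultimately show ?thesis by linarith
qed

lemma dual_bond_move_coord:
  assumes "x \<in> dual_vertices" "w \<in> dual_vertices" "p \<in> box_of x" "p \<in> box_of w" "x$i \<noteq> w$i"
  defines "x' \<equiv> \<chi> j. if j = i then w$i else x$j"
  shows "dual_bond x x'" and "p \<in> box_of x'"
proof -
  have x'_nth: "x'$j = (if j = i then w$i else x$j)" for j unfolding x'_def by simp
  have "x' \<in> dual_vertices" using assms(1,2) unfolding dual_vertices_def by (simp add: x'_nth)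
  moreover have "(\<Sum>j\<in>UNIV. \<bar>x$j - x'$j\<bar>) = (\<Sum>j\<in>UNIV. if j = i then \<bar>x$i - w$i\<bar> else 0)"
    by (rule sum.cong) (auto simp: x'_nth)
  ultimately show "dual_bond x x'"
    using assms(1) box_of_common_point_coord_dist[OF assms(1-5)] by (simp add: dual_bond_def)
  show "p \<in> box_of x'" using assms(3,4) unfolding mem_box_of_iff by (simp add: x'_nth)
qed

lemma common_point_on_boundary_face:
  assumes "x \<in> dual_vertices" "w \<in> dual_vertices" "x \<in> C" "w \<notin> C" "p \<in> box_of x" "p \<in> box_of w"
  shows "\<exists>(a, b)\<in>edge_boundary C. p \<in> face_of_bond a b"
  using assms
proof (induction "card {i. x$i \<noteq> w$i}" arbitrary: x rule: less_induct)
  case less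
  from less.prems have "x \<noteq> w" by auto
  then obtain i where i: "x$i \<noteq> w$i" by (metis vec_eq_iff)
  define x' where "x' = (\<chi> j. if j = i then w$i else x$j)"
  have bond: "dual_bond x x'" and p_x': "p \<in> box_of x'"
    using dual_bond_move_coord[OF less.prems(1,2,5,6) i] unfolding x'_def by blast+
  show ?case
  proof (cases "x' \<in> C")
    case False
    then have "(x, x') \<in> edge_boundary C" using bond less.prems(3) by (simp add: edge_boundary_def)
    moreover have "p \<in> face_of_bond x x'" using less.prems(5) p_x' by (simp add: face_of_bond_def)
    ultimately show ?thesis by blast
  next
    case True
    have diff_coords: "{j. x'$j \<noteq> w$j} = {j. x$j \<noteq> w$j} - {i}" by (auto simp: x'_def)
    have "card {j. x'$j \<noteq> w$j} < card {j. x$j \<noteq> w$j}"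
      unfolding diff_coords card_Diff1_less_iff using i by simp
    moreover have "x' \<in> dual_vertices" using bond by (simp add: dual_bond_def)
    ultimately show ?thesis using less.hyps[of x'] less.prems(2,4,6) p_x' True by blast
  qed
qed

lemma frontier_cluster_region:
  assumes "C \<subseteq> dual_vertices"
  shows "frontier (cluster_region C) = (\<Union>(x, y)\<in>edge_boundary C. face_of_bond x y)"
proof (intro equalityI subsetI)
  fix p assume p: "p \<in> frontier (cluster_region C)"
  then have "p \<in> cluster_region C"
    using closed_cluster_region[OF assms] frontier_subset_closed by blast
  then obtain x where x: "x \<in> C" "p \<in> box_of x" unfolding cluster_region_def by blast
  obtain w where w: "w \<in> dual_vertices" "w \<notin> C" "p \<in> box_of w"
    using frontier_imp_mem_box_outside[OF assms p] by blast
  have "x \<in> dual_vertices" using x(1) assms by blast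
  from common_point_on_boundary_face[OF this w(1) x(1) w(2) x(2) w(3)]
  show "p \<in> (\<Union>(x, y)\<in>edge_boundary C. face_of_bond x y)" by blast
next
  fix p assume "p \<in> (\<Union>(x, y)\<in>edge_boundary C. face_of_bond x y)"
  then obtain x y where xy: "dual_bond x y" "x \<in> C" "y \<notin> C" "p \<in> box_of x" "p \<in> box_of y"
    by (auto simp: edge_boundary_def face_of_bond_def)
  have "p \<in> cluster_region C" using xy(2,4) unfolding cluster_region_def by blast
  moreover have "y \<in> dual_vertices" using xy(1) by (simp add: dual_bond_def)
  then have "p \<notin> interior (cluster_region C)"
    using box_of_outside_disjoint_interior[OF assms _ xy(3)] xy(5) by blast
  ultimately show "p \<in> frontier (cluster_region C)"
    unfolding frontier_def using closure_subset by blast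
qed

lemma open_dual_cluster_subset_dual_vertices:
  assumes "open_dual_cluster \<omega> C"
  shows "C \<subseteq> dual_vertices"
proof
  fix y assume "y \<in> C"
  with assms obtain x where "(x, y) \<in> {(a, b). open_dual_adj \<omega> a b}\<^sup>*" "x \<in> dual_vertices"
    unfolding open_dual_cluster_def by blast
  then show "y \<in> dual_vertices"
    by (induction rule: rtrancl_induct) (auto simp: open_dual_adj_def dual_bond_def)
qed

theorem lemma3p2:
  fixes \<omega> :: "(real^'n) set \<Rightarrow> bool" and C :: "(real^'n) set"
  assumes "CARD('n) \<ge> 2"
    and "open_dual_cluster \<omega> C"
  shows "frontier (cluster_region C) = (\<Union>(x, y)\<in>edge_boundary C. face_of_bond x y)"
  using frontier_cluster_region open_dual_cluster_subset_dual_vertices[OF assms(2)] by blast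

end
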